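(* Let $p\in\mathbb{C}[z_1,\dots,z_d]$ have no zeros in $\mathbb{D}^d$ and multidegree $n=(n_1,\dots,n_d)$, let $\tilde p(z)=z^n\overline{p(1/\bar z)}$, and suppose $p$ vanishes to order $M$ at $u=(1,\dots,1)$. Then we can write $p(u-\zeta)=\sum_{j=M}^{|n|}P_j(\zeta)$ and $\tilde p(u-\zeta)=\sum_{j=M}^{|n|}Q_j(\zeta)$ with $P_j,Q_j$ homogeneous of degree $j$, and: there is $\nu\in\mathbb{T}$ such that $\nu P_M$ has real coefficients, and $Q_M$ is a unimodular constant multiple of $P_M$.
   Context: $\mathbb{D}$ is the open unit disk, $\mathbb{T}$ the unit circle. $z^n=z_1^{n_1}\cdots z_d^{n_d}$, $1/\bar z=(1/\bar z_1,\dots,1/\bar z_d)$, $|n|=n_1+\dots+n_d$. Vanishing to order $M$ at $u$ means the lowest-degree nonzero homogeneous term of $\zeta\mapsto p(u-\zeta)$ has degree $M$. *)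

theory Defs
  imports "HOL-Analysis.Analysis"
begin

text \<open>A polynomial in the d variables z_0,...,z_{d-1} is represented by its coefficient
  function c on multi-indices (alpha :: nat => nat); it is required to have finite support
  and only multi-indices with alpha i = 0 for i >= d may carry nonzero coefficients.\<close>

definition is_mpoly :: "nat \<Rightarrow> ((nat \<Rightarrow> nat) \<Rightarrow> complex) \<Rightarrow> bool" where
  "is_mpoly d c \<longleftrightarrow> finite {\<alpha>. c \<alpha> \<noteq> 0} \<and> (\<forall>\<alpha>. c \<alpha> \<noteq> 0 \<longrightarrow> (\<forall>i\<ge>d. \<alpha> i = 0))"

definition peval :: "nat \<Rightarrow> ((nat \<Rightarrow> nat) \<Rightarrow> complex) \<Rightarrow> (nat \<Rightarrow> complex) \<Rightarrow> complex" where
  "peval d c z = (\<Sum>\<alpha>\<in>{\<alpha>. c \<alpha> \<noteq> 0}. c \<alpha> * (\<Prod>i<d. z i ^ \<alpha> i))"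

definition mdeg :: "((nat \<Rightarrow> nat) \<Rightarrow> complex) \<Rightarrow> nat \<Rightarrow> nat" where
  "mdeg c i = Max ({\<alpha> i | \<alpha>. c \<alpha> \<noteq> 0} \<union> {0})"

text \<open>Reflection: coefficients of z^n conj(p(1/conj z)), i.e. tilde c(alpha) = conj(c(n - alpha)).\<close>
definition reflect :: "((nat \<Rightarrow> nat) \<Rightarrow> complex) \<Rightarrow> (nat \<Rightarrow> nat) \<Rightarrow> complex" where
  "reflect c \<alpha> = (if (\<forall>i. \<alpha> i \<le> mdeg c i) then cnj (c (\<lambda>i. mdeg c i - \<alpha> i)) else 0)"

text \<open>Coefficients of the homogeneous part of degree j of zeta |-> p(u - zeta),
  u = (1,...,1), obtained by expanding (1 - zeta)^alpha binomially.\<close>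
definition hcoef :: "nat \<Rightarrow> ((nat \<Rightarrow> nat) \<Rightarrow> complex) \<Rightarrow> nat \<Rightarrow> (nat \<Rightarrow> nat) \<Rightarrow> complex" where
  "hcoef d c j \<beta> =
     (if (\<Sum>i<d. \<beta> i) = j \<and> (\<forall>i\<ge>d. \<beta> i = 0)
      then (\<Sum>\<alpha>\<in>{\<alpha>. c \<alpha> \<noteq> 0}. c \<alpha> * (\<Prod>i<d. of_nat (\<alpha> i choose \<beta> i) * (-1) ^ \<beta> i))
      else 0)"

definition vanishes_to_order :: "nat \<Rightarrow> ((nat \<Rightarrow> nat) \<Rightarrow> complex) \<Rightarrow> nat \<Rightarrow> bool" where
  "vanishes_to_order d c M \<longleftrightarrow>
     (\<forall>j<M. \<forall>\<beta>. hcoef d c j \<beta> = 0) \<and> (\<exists>\<beta>. hcoef d c M \<beta> \<noteq> 0)"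

end

theory Submission
  imports Defs "HOL-Computational_Algebra.Fundamental_Theorem_Algebra" "HOL-Complex_Analysis.Complex_Analysis"
begin

text \<open>Expanding each \<open>(1 - \<zeta>)\<^sup>\<alpha>\<close> binomially gives the homogeneous parts \<open>P\<^sub>j\<close>. For the
  reflection, the coefficients of \<open>(1 - \<zeta>)\<^sup>n\<^sup>-\<^sup>\<gamma>\<close> are alternating combinations of those of
  \<open>(1 - \<zeta>)\<^sup>\<gamma>\<close>; since the parts of \<open>p\<close> below degree \<open>M\<close> vanish, so do those of the reflection,
  and \<open>Q\<^sub>M\<close> has the conjugated coefficients of \<open>(-1)\<^sup>M P\<^sub>M\<close>.

  Analytically, \<open>p(u - t\<zeta>) / t\<^sup>M \<rightarrow> P\<^sub>M(\<zeta>)\<close> as \<open>t \<rightarrow> 0\<^sup>+\<close>, and \<open>u - t\<zeta>\<close> lies in the polydisc for small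
  \<open>t\<close> when all \<open>Re \<zeta>\<^sub>i > 0\<close>; by Hurwitz's theorem \<open>P\<^sub>M\<close> has no zeros on the product of right
  half-planes. Homogeneity then forces the zeros of \<open>P\<^sub>M\<close> on each line \<open>a + z b\<close> with \<open>a, b\<close> real,
  \<open>b > 0\<close>, to be real, so \<open>P\<^sub>M(y) / P\<^sub>M(u)\<close> is real for real \<open>y\<close>. Hence \<open>\<nu> = cnj P\<^sub>M(u) / |P\<^sub>M(u)|\<close>
  makes \<open>\<nu> P\<^sub>M\<close> real, and \<open>Q\<^sub>M = (-1)\<^sup>M \<nu>\<^sup>2 P\<^sub>M\<close>.\<close>

definition monom_eval :: "nat \<Rightarrow> (nat \<Rightarrow> nat) \<Rightarrow> (nat \<Rightarrow> complex) \<Rightarrow> complex" where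
  "monom_eval d \<beta> z = (\<Prod>i<d. z i ^ \<beta> i)"

definition index_box :: "(nat \<Rightarrow> nat) \<Rightarrow> (nat \<Rightarrow> nat) set" where
  "index_box n = {\<alpha>. \<forall>i. \<alpha> i \<le> n i}"

text \<open>The coefficient of \<open>\<zeta>\<^sup>\<beta>\<close> in \<open>(1 - \<zeta>)\<^sup>\<alpha>\<close>.\<close>
definition shift_coeff :: "nat \<Rightarrow> (nat \<Rightarrow> nat) \<Rightarrow> (nat \<Rightarrow> nat) \<Rightarrow> complex" where
  "shift_coeff d \<alpha> \<beta> = (\<Prod>i<d. of_nat (\<alpha> i choose \<beta> i) * (-1) ^ \<beta> i)"

lemma index_box_vanishes_above:
  "\<alpha> \<in> index_box n \<Longrightarrow> \<forall>i\<ge>d. n i = 0 \<Longrightarrow> \<forall>i\<ge>d. \<alpha> i = 0"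
  by (auto simp: index_box_def) (metis le_zero_eq)

lemma finite_index_box:
  assumes "\<forall>i\<ge>d. n i = 0"
  shows "finite (index_box n)"
proof -
  have "index_box n \<subseteq> (\<lambda>f i. if i < d then f i else 0) ` PiE {..<d} (\<lambda>i. {..n i})"
  proof
    fix \<alpha> assume "\<alpha> \<in> index_box n"
    then show "\<alpha> \<in> (\<lambda>f i. if i < d then f i else 0) ` PiE {..<d} (\<lambda>i. {..n i})"
      using index_box_vanishes_above[OF _ assms]
      by (intro image_eqI[where x = "restrict \<alpha> {..<d}"]) (auto simp: index_box_def fun_eq_iff)
  qed
  then show ?thesis
    by (rule finite_subset) (auto intro: finite_PiE)
qed

lemma peval_eq_sum_superset:
  "finite S \<Longrightarrow> {\<alpha>. c \<alpha> \<noteq> 0} \<subseteq> S \<Longrightarrow> peval d c z = (\<Sum>\<alpha>\<in>S. c \<alpha> * monom_eval d \<alpha> z)"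
  unfolding peval_def monom_eval_def by (rule sum.mono_neutral_left) auto

lemma prod_sum_eq_sum_index_box:
  fixes f :: "nat \<Rightarrow> nat \<Rightarrow> 'a::comm_semiring_1"
  assumes "\<forall>i\<ge>d. n i = 0"
  shows "(\<Prod>i<d. \<Sum>b\<le>n i. f i b) = (\<Sum>\<beta>\<in>index_box n. \<Prod>i<d. f i (\<beta> i))"
proof -
  have "(\<Prod>i<d. \<Sum>b\<le>n i. f i b) = (\<Sum>g\<in>PiE {..<d} (\<lambda>i. {..n i}). \<Prod>i<d. f i (g i))"
    by (rule prod_sum_PiE) auto
  also have "\<dots> = (\<Sum>\<beta>\<in>index_box n. \<Prod>i<d. f i (\<beta> i))"
  proof (rule sum.reindex_bij_witness[where i = "\<lambda>\<beta>. restrict \<beta> {..<d}"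
        and j = "\<lambda>g i. if i < d then g i else 0"])
    fix \<beta> assume "\<beta> \<in> index_box n"
    then show "(\<lambda>i. if i < d then restrict \<beta> {..<d} i else 0) = \<beta>"
      using index_box_vanishes_above[OF _ assms] by (auto simp: fun_eq_iff)
    show "restrict \<beta> {..<d} \<in> PiE {..<d} (\<lambda>i. {..n i})"
      using \<open>\<beta> \<in> index_box n\<close> by (auto simp: index_box_def)
  next
    fix g assume g: "g \<in> PiE {..<d} (\<lambda>i. {..n i})"
    then show "restrict (\<lambda>i. if i < d then g i else 0) {..<d} = g"
      by (auto simp: fun_eq_iff PiE_def extensional_def)
    show "(\<lambda>i. if i < d then g i else 0) \<in> index_box n"
      using g assms by (auto simp: index_box_def PiE_def)
    show "(\<Prod>i<d. f i (if i < d then g i else 0)) = (\<Prod>i<d. f i (g i))"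
      by (auto intro: prod.cong)
  qed
  finally show ?thesis .
qed

lemma hcoef_support_subset:
  assumes "{\<alpha>. c \<alpha> \<noteq> 0} \<subseteq> index_box n"
  shows "{\<beta>. hcoef d c j \<beta> \<noteq> 0} \<subseteq> index_box n"
proof
  fix \<beta> assume nonzero: "\<beta> \<in> {\<beta>. hcoef d c j \<beta> \<noteq> 0}"
  show "\<beta> \<in> index_box n"
  proof (rule ccontr)
    assume "\<beta> \<notin> index_box n"
    then obtain k where k: "n k < \<beta> k" by (auto simp: index_box_def not_le)
    have "k < d"
      using nonzero k by (auto simp: hcoef_def split: if_splits) (metis leI less_nat_zero_code)
    have "(\<Prod>i<d. of_nat (\<alpha> i choose \<beta> i) * (-1::complex) ^ \<beta> i) = 0" if "c \<alpha> \<noteq> 0" for \<alpha>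
    proof -
      have "\<alpha> k \<le> n k" using assms that by (auto simp: index_box_def)
      then have "\<alpha> k choose \<beta> k = 0" using k by simp
      then show ?thesis using \<open>k < d\<close> by (intro prod_zero) auto
    qed
    then have "hcoef d c j \<beta> = 0"
      unfolding hcoef_def by (auto intro!: sum.neutral simp del: prod_zero_iff)
    then show False using nonzero by simp
  qed
qed

lemma hcoef_eq_sum_index_box:
  assumes "{\<alpha>. c \<alpha> \<noteq> 0} \<subseteq> index_box n" and "\<forall>i\<ge>d. n i = 0"
  shows "hcoef d c j \<beta> = (if (\<Sum>i<d. \<beta> i) = j \<and> (\<forall>i\<ge>d. \<beta> i = 0)
           then (\<Sum>\<alpha>\<in>index_box n. c \<alpha> * shift_coeff d \<alpha> \<beta>) else 0)"
proof -
  have "(\<Sum>\<alpha>\<in>{\<alpha>. c \<alpha> \<noteq> 0}. c \<alpha> * shift_coeff d \<alpha> \<beta>) = (\<Sum>\<alpha>\<in>index_box n. c \<alpha> * shift_coeff d \<alpha> \<beta>)"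
    by (rule sum.mono_neutral_left) (use assms finite_index_box in auto)
  then show ?thesis by (simp only: hcoef_def shift_coeff_def)
qed

lemma one_minus_power_eq_sum:
  fixes z :: complex
  assumes "a \<le> m"
  shows "(1 - z) ^ a = (\<Sum>b\<le>m. of_nat (a choose b) * (-1) ^ b * z ^ b)"
proof -
  have "(1 - z) ^ a = (\<Sum>b\<le>a. of_nat (a choose b) * (-z) ^ b * 1 ^ (a - b))"
    using binomial_ring[of "-z" 1 a] by simp
  also have "\<dots> = (\<Sum>b\<le>m. of_nat (a choose b) * (-1) ^ b * z ^ b)"
    by (rule sum.mono_neutral_cong_left) (use assms in \<open>auto simp: power_minus[of z]\<close>)
  finally show ?thesis .
qed

lemma monom_eval_shift:
  assumes "\<alpha> \<in> index_box n" and "\<forall>i\<ge>d. n i = 0"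
  shows "monom_eval d \<alpha> (\<lambda>i. 1 - \<zeta> i) = (\<Sum>\<beta>\<in>index_box n. shift_coeff d \<alpha> \<beta> * monom_eval d \<beta> \<zeta>)"
proof -
  have "monom_eval d \<alpha> (\<lambda>i. 1 - \<zeta> i)
      = (\<Prod>i<d. \<Sum>b\<le>n i. of_nat (\<alpha> i choose b) * (-1) ^ b * \<zeta> i ^ b)"
    unfolding monom_eval_def
    by (intro prod.cong refl one_minus_power_eq_sum) (use assms in \<open>auto simp: index_box_def\<close>)
  also have "\<dots> = (\<Sum>\<beta>\<in>index_box n. \<Prod>i<d. of_nat (\<alpha> i choose \<beta> i) * (-1) ^ \<beta> i * \<zeta> i ^ \<beta> i)"
    by (rule prod_sum_eq_sum_index_box[OF assms(2)])
  also have "\<dots> = (\<Sum>\<beta>\<in>index_box n. shift_coeff d \<alpha> \<beta> * monom_eval d \<beta> \<zeta>)"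
    unfolding shift_coeff_def monom_eval_def by (simp add: prod.distrib)
  finally show ?thesis .
qed

lemma peval_shift_eq_sum_hcoef:
  assumes supp: "{\<alpha>. c \<alpha> \<noteq> 0} \<subseteq> index_box n" and nz: "\<forall>i\<ge>d. n i = 0"
  shows "peval d c (\<lambda>i. 1 - \<zeta> i) = (\<Sum>j=0..(\<Sum>i<d. n i). peval d (hcoef d c j) \<zeta>)"
proof -
  have fin: "finite (index_box n)" using finite_index_box[OF nz] .
  have deg_collect: "(\<Sum>\<alpha>\<in>index_box n. c \<alpha> * shift_coeff d \<alpha> \<beta>) * monom_eval d \<beta> \<zeta>
      = (\<Sum>j=0..(\<Sum>i<d. n i). hcoef d c j \<beta> * monom_eval d \<beta> \<zeta>)" if "\<beta> \<in> index_box n" for \<beta>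
  proof -
    have "(\<Sum>i<d. \<beta> i) \<le> (\<Sum>i<d. n i)"
      using that by (intro sum_mono) (auto simp: index_box_def)
    moreover have "\<forall>i\<ge>d. \<beta> i = 0" using index_box_vanishes_above[OF that nz] .
    ultimately have "(\<Sum>j=0..(\<Sum>i<d. n i). hcoef d c j \<beta> * monom_eval d \<beta> \<zeta>)
        = (\<Sum>j=0..(\<Sum>i<d. n i). if (\<Sum>i<d. \<beta> i) = j
             then (\<Sum>\<alpha>\<in>index_box n. c \<alpha> * shift_coeff d \<alpha> \<beta>) * monom_eval d \<beta> \<zeta> else 0)"
      by (intro sum.cong refl) (simp add: hcoef_eq_sum_index_box[OF supp nz])
    with \<open>(\<Sum>i<d. \<beta> i) \<le> _\<close> show ?thesis by simp
  qed
  have "peval d c (\<lambda>i. 1 - \<zeta> i) = (\<Sum>\<alpha>\<in>index_box n. c \<alpha> * monom_eval d \<alpha> (\<lambda>i. 1 - \<zeta> i))"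
    by (rule peval_eq_sum_superset[OF fin supp])
  also have "\<dots> = (\<Sum>\<alpha>\<in>index_box n. \<Sum>\<beta>\<in>index_box n. c \<alpha> * shift_coeff d \<alpha> \<beta> * monom_eval d \<beta> \<zeta>)"
    by (intro sum.cong refl) (simp add: monom_eval_shift[OF _ nz] sum_distrib_left mult.assoc)
  also have "\<dots> = (\<Sum>\<beta>\<in>index_box n. (\<Sum>\<alpha>\<in>index_box n. c \<alpha> * shift_coeff d \<alpha> \<beta>) * monom_eval d \<beta> \<zeta>)"
    by (subst sum.swap) (simp add: sum_distrib_right)
  also have "\<dots> = (\<Sum>j=0..(\<Sum>i<d. n i). \<Sum>\<beta>\<in>index_box n. hcoef d c j \<beta> * monom_eval d \<beta> \<zeta>)"
    by (subst sum.swap) (intro sum.cong refl deg_collect)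
  also have "\<dots> = (\<Sum>j=0..(\<Sum>i<d. n i). peval d (hcoef d c j) \<zeta>)"
    by (intro sum.cong refl peval_eq_sum_superset[symmetric] fin hcoef_support_subset[OF supp])
  finally show ?thesis .
qed

lemma peval_shift_eq_sum_hcoef_from:
  assumes "{\<alpha>. c \<alpha> \<noteq> 0} \<subseteq> index_box n" and "\<forall>i\<ge>d. n i = 0"
    and "\<forall>j<M. \<forall>\<beta>. hcoef d c j \<beta> = 0"
  shows "peval d c (\<lambda>i. 1 - \<zeta> i) = (\<Sum>j=M..(\<Sum>i<d. n i). peval d (hcoef d c j) \<zeta>)"
  unfolding peval_shift_eq_sum_hcoef[OF assms(1,2)]
  by (rule sum.mono_neutral_right) (use assms(3) in \<open>auto simp: peval_def\<close>)

lemma choose_diff_eq_alternating_sum: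
  assumes "g \<le> m"
  shows "(of_nat ((m - g) choose b) :: 'a::comm_ring_1)
       = (\<Sum>l\<le>b. (-1) ^ l * of_nat (g choose l) * of_nat ((m - l) choose (b - l)))"
  using assms
proof (induction g arbitrary: m b)
  case 0
  have "(\<Sum>l\<le>b. (-1) ^ l * of_nat (0 choose l) * of_nat ((m - l) choose (b - l)) :: 'a)
      = (\<Sum>l\<le>b. if l = 0 then of_nat (m choose b) else 0)"
    by (intro sum.cong refl) (auto simp: binomial_eq_0)
  then show ?case by simp
next
  case (Suc g)
  then obtain m' where m: "m = Suc m'" and "g \<le> m'" by (cases m) auto
  let ?F = "\<lambda>G m b l. (-1) ^ l * of_nat (G choose l) * (of_nat ((m - l) choose (b - l)) :: 'a)"
  show ?case
  proof (cases b)
    case (Suc b')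
    text \<open>Pascal's rule on \<open>Suc g choose Suc k\<close> splits the sum into the instances \<open>(g, m, b)\<close> and \<open>(g, m', b')\<close>.\<close>
    have "(\<Sum>l\<le>b. ?F (Suc g) m b l) = ?F (Suc g) m b 0 + (\<Sum>k\<le>b'. ?F (Suc g) m b (Suc k))"
      unfolding Suc by (rule sum.atMost_Suc_shift)
    also have "(\<Sum>k\<le>b'. ?F (Suc g) m b (Suc k)) = (\<Sum>k\<le>b'. ?F g m b (Suc k)) - (\<Sum>k\<le>b'. ?F g m' b' k)"
      unfolding sum_subtractf[symmetric] by (intro sum.cong refl) (simp add: m Suc algebra_simps)
    also have "?F (Suc g) m b 0 + ((\<Sum>k\<le>b'. ?F g m b (Suc k)) - (\<Sum>k\<le>b'. ?F g m' b' k))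
       = (\<Sum>l\<le>b. ?F g m b l) - (\<Sum>k\<le>b'. ?F g m' b' k)"
      unfolding Suc by (subst sum.atMost_Suc_shift) simp
    also have "\<dots> = of_nat ((m - g) choose b) - of_nat ((m' - g) choose b')"
      using Suc.IH[of m b] Suc.IH[of m' b'] \<open>g \<le> m'\<close> m by simp
    also have "\<dots> = of_nat ((m - Suc g) choose b)"
      using \<open>g \<le> m'\<close> by (simp add: m Suc Suc_diff_le)
    finally show ?thesis by simp
  qed simp
qed

lemma is_mpoly_support_subset:
  assumes "is_mpoly d c"
  shows "{\<alpha>. c \<alpha> \<noteq> 0} \<subseteq> index_box (mdeg c)"
proof
  fix \<alpha> assume "\<alpha> \<in> {\<alpha>. c \<alpha> \<noteq> 0}"
  moreover have "finite ({\<alpha> i | \<alpha>. c \<alpha> \<noteq> 0} \<union> {0})" for i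
    using assms by (simp add: is_mpoly_def setcompr_eq_image)
  ultimately show "\<alpha> \<in> index_box (mdeg c)"
    unfolding index_box_def mdeg_def by (auto intro: Max_ge)
qed

lemma is_mpoly_mdeg_vanishes_above:
  assumes "is_mpoly d c" and "d \<le> i"
  shows "mdeg c i = 0"
proof -
  have only_zero: "{\<alpha> i | \<alpha>. c \<alpha> \<noteq> 0} \<union> {0} = {0}"
    using assms by (auto simp: is_mpoly_def)
  show ?thesis unfolding mdeg_def only_zero by simp
qed

lemma reflect_support_subset: "{\<alpha>. reflect c \<alpha> \<noteq> 0} \<subseteq> index_box (mdeg c)"
  by (auto simp: reflect_def index_box_def split: if_splits)

lemma shift_coeff_complement:
  assumes "\<gamma> \<in> index_box n" and "\<forall>i\<ge>d. \<beta> i = 0"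
  shows "shift_coeff d (\<lambda>i. n i - \<gamma> i) \<beta>
       = (\<Sum>\<mu>\<in>index_box \<beta>. (\<Prod>i<d. (-1) ^ \<beta> i * of_nat ((n i - \<mu> i) choose (\<beta> i - \<mu> i)))
                             * shift_coeff d \<gamma> \<mu>)"
proof -
  have "shift_coeff d (\<lambda>i. n i - \<gamma> i) \<beta>
      = (\<Prod>i<d. \<Sum>l\<le>\<beta> i. (-1) ^ \<beta> i * of_nat ((n i - l) choose (\<beta> i - l))
                             * (of_nat (\<gamma> i choose l) * (-1) ^ l))"
    unfolding shift_coeff_def
  proof (intro prod.cong refl)
    fix i
    have "\<gamma> i \<le> n i" using assms(1) by (simp add: index_box_def)
    from choose_diff_eq_alternating_sum[OF this, of "\<beta> i", where 'a = complex]
    show "of_nat (n i - \<gamma> i choose \<beta> i) * (-1) ^ \<beta> i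
        = (\<Sum>l\<le>\<beta> i. (-1) ^ \<beta> i * of_nat ((n i - l) choose (\<beta> i - l))
                      * (of_nat (\<gamma> i choose l) * (-1) ^ l :: complex))"
      by (simp add: sum_distrib_left sum_distrib_right mult_ac)
  qed
  also have "\<dots> = (\<Sum>\<mu>\<in>index_box \<beta>. \<Prod>i<d. (-1) ^ \<beta> i * of_nat ((n i - \<mu> i) choose (\<beta> i - \<mu> i))
                             * (of_nat (\<gamma> i choose \<mu> i) * (-1) ^ \<mu> i))"
    by (rule prod_sum_eq_sum_index_box[OF assms(2)])
  also have "\<dots> = (\<Sum>\<mu>\<in>index_box \<beta>. (\<Prod>i<d. (-1) ^ \<beta> i * of_nat ((n i - \<mu> i) choose (\<beta> i - \<mu> i)))
                             * shift_coeff d \<gamma> \<mu>)"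
    unfolding shift_coeff_def by (simp add: prod.distrib)
  finally show ?thesis .
qed

text \<open>By \<open>shift_coeff_complement\<close>, the coefficient at \<open>\<beta>\<close> of the reflected expansion combines the
  conjugated coefficients at all \<open>\<mu> \<le> \<beta>\<close>; for \<open>j \<le> M\<close> only \<open>\<mu> = \<beta>\<close> is not of degree below \<open>M\<close>.\<close>
lemma hcoef_reflect_lowest:
  assumes supp: "{\<alpha>. c \<alpha> \<noteq> 0} \<subseteq> index_box (mdeg c)" and nz: "\<forall>i\<ge>d. mdeg c i = 0"
    and low: "\<forall>j<M. \<forall>\<beta>. hcoef d c j \<beta> = 0" and "j \<le> M"
  shows "hcoef d (reflect c) j \<beta> = (-1) ^ j * cnj (hcoef d c j \<beta>)"
proof (cases "(\<Sum>i<d. \<beta> i) = j \<and> (\<forall>i\<ge>d. \<beta> i = 0)")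
  case False
  then show ?thesis by (auto simp: hcoef_def)
next
  case True
  define n where "n = mdeg c"
  define W where "W \<mu> = (\<Prod>i<d. (-1) ^ \<beta> i * (of_nat ((n i - \<mu> i) choose (\<beta> i - \<mu> i)) :: complex))" for \<mu>
  have supp': "{\<alpha>. c \<alpha> \<noteq> 0} \<subseteq> index_box n" and nz': "\<forall>i\<ge>d. n i = 0"
    using supp nz by (simp_all add: n_def)
  have nz\<beta>: "\<forall>i\<ge>d. \<beta> i = 0" using True by simp
  have lower_vanish: "W \<mu> * cnj (\<Sum>\<gamma>\<in>index_box n. c \<gamma> * shift_coeff d \<gamma> \<mu>)
      = (if \<mu> = \<beta> then W \<beta> * cnj (hcoef d c j \<beta>) else 0)" if "\<mu> \<in> index_box \<beta>" for \<mu>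
  proof -
    have "(\<Sum>\<gamma>\<in>index_box n. c \<gamma> * shift_coeff d \<gamma> \<mu>) = hcoef d c (\<Sum>i<d. \<mu> i) \<mu>"
      using index_box_vanishes_above[OF that nz\<beta>] by (simp add: hcoef_eq_sum_index_box[OF supp' nz'])
    moreover have "hcoef d c (\<Sum>i<d. \<mu> i) \<mu> = 0" if "\<mu> \<noteq> \<beta>"
    proof -
      obtain k where "\<mu> k \<noteq> \<beta> k" using \<open>\<mu> \<noteq> \<beta>\<close> by auto
      then have "\<mu> k < \<beta> k" using \<open>\<mu> \<in> index_box \<beta>\<close> by (simp add: index_box_def order_less_le)
      moreover from this have "k < d" using nz\<beta> by (metis not_le not_less0)
      ultimately have "(\<Sum>i<d. \<mu> i) < (\<Sum>i<d. \<beta> i)"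
        using \<open>\<mu> \<in> index_box \<beta>\<close> by (intro sum_strict_mono_ex1) (auto simp: index_box_def)
      then show ?thesis using True \<open>j \<le> M\<close> low by simp
    qed
    ultimately show ?thesis using True by auto
  qed
  have "hcoef d (reflect c) j \<beta> = (\<Sum>\<alpha>\<in>index_box n. reflect c \<alpha> * shift_coeff d \<alpha> \<beta>)"
    using True hcoef_eq_sum_index_box[OF reflect_support_subset[of c, folded n_def] nz'] by simp
  also have "\<dots> = (\<Sum>\<alpha>\<in>index_box n. cnj (c (\<lambda>i. n i - \<alpha> i)) * shift_coeff d \<alpha> \<beta>)"
    by (intro sum.cong refl) (auto simp: reflect_def index_box_def n_def)
  also have "\<dots> = (\<Sum>\<gamma>\<in>index_box n. cnj (c \<gamma>) * shift_coeff d (\<lambda>i. n i - \<gamma> i) \<beta>)"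
    by (rule sum.reindex_bij_witness[where i = "\<lambda>\<gamma> i. n i - \<gamma> i" and j = "\<lambda>\<gamma> i. n i - \<gamma> i"])
       (auto simp: index_box_def fun_eq_iff)
  also have "\<dots> = (\<Sum>\<gamma>\<in>index_box n. \<Sum>\<mu>\<in>index_box \<beta>. W \<mu> * (cnj (c \<gamma>) * shift_coeff d \<gamma> \<mu>))"
    by (intro sum.cong refl) (simp add: shift_coeff_complement[OF _ nz\<beta>] W_def sum_distrib_left mult_ac)
  also have "\<dots> = (\<Sum>\<mu>\<in>index_box \<beta>. W \<mu> * cnj (\<Sum>\<gamma>\<in>index_box n. c \<gamma> * shift_coeff d \<gamma> \<mu>))"
    by (subst sum.swap) (simp add: sum_distrib_left W_def shift_coeff_def)
  also have "\<dots> = (\<Sum>\<mu>\<in>index_box \<beta>. if \<mu> = \<beta> then W \<beta> * cnj (hcoef d c j \<beta>) else 0)"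
    by (rule sum.cong[OF refl lower_vanish])
  also have "\<dots> = W \<beta> * cnj (hcoef d c j \<beta>)"
    using finite_index_box[OF nz\<beta>] by (simp add: index_box_def)
  also have "W \<beta> = (-1) ^ j"
    using True by (simp add: W_def power_sum[symmetric])
  finally show ?thesis .
qed

lemma peval_along_line_eq_poly:
  assumes "finite {\<alpha>. a \<alpha> \<noteq> 0}"
  obtains q where "\<And>l. peval d a (\<lambda>i. x i + l * v i) = poly q l"
proof
  show "peval d a (\<lambda>i. x i + l * v i)
      = poly (\<Sum>\<alpha>\<in>{\<alpha>. a \<alpha> \<noteq> 0}. smult (a \<alpha>) (\<Prod>i<d. [:x i, v i:] ^ \<alpha> i)) l" for l
    by (simp add: peval_def poly_sum poly_prod mult_ac)
qed

lemma peval_hcoef_scale: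
  "peval d (hcoef d c j) (\<lambda>i. t * w i) = t ^ j * peval d (hcoef d c j) w"
proof -
  have "(\<Prod>i<d. (t * w i) ^ \<alpha> i) = t ^ j * (\<Prod>i<d. w i ^ \<alpha> i)" if "hcoef d c j \<alpha> \<noteq> 0" for \<alpha>
  proof -
    have "(\<Sum>i<d. \<alpha> i) = j" using that by (auto simp: hcoef_def split: if_splits)
    then show ?thesis by (simp add: power_mult_distrib prod.distrib power_sum[symmetric])
  qed
  then show ?thesis
    unfolding peval_def sum_distrib_left by (intro sum.cong refl) (simp add: mult_ac)
qed

lemma poly_eq_0_if_vanishes_on_reals:
  fixes q :: "complex poly"
  assumes "\<And>s. poly q (of_real s) = 0"
  shows "q = 0"
proof (rule ccontr)
  assume "q \<noteq> 0"
  then have "finite {x. poly q x = 0}" by (rule poly_roots_finite)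
  moreover have "range complex_of_real \<subseteq> {x. poly q x = 0}" using assms by auto
  ultimately have "finite (range complex_of_real)" by (rule finite_subset[rotated])
  then show False
    using finite_imageD[OF _ inj_of_real] infinite_UNIV_char_0 by blast
qed

lemma sum_index_box_split_last:
  "(\<Sum>\<beta>\<in>index_box n. F \<beta>) = (\<Sum>k\<le>n d. \<Sum>\<beta>'\<in>index_box (n(d := 0)). F (\<beta>'(d := k)))"
proof -
  have "(\<Sum>k\<le>n d. \<Sum>\<beta>'\<in>index_box (n(d := 0)). F (\<beta>'(d := k)))
      = (\<Sum>(k, \<beta>')\<in>{..n d} \<times> index_box (n(d := 0)). F (\<beta>'(d := k)))"
    by (rule sum.cartesian_product)
  also have "\<dots> = (\<Sum>\<beta>\<in>index_box n. F \<beta>)"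
    by (rule sum.reindex_bij_witness[where i = "\<lambda>\<beta>. (\<beta> d, \<beta>(d := 0))" and j = "\<lambda>(k, \<beta>'). \<beta>'(d := k)"])
       (auto simp: index_box_def fun_eq_iff, metis le_zero_eq, metis)
  finally show ?thesis by simp
qed

lemma monom_eval_Suc_upd: "monom_eval (Suc d) (\<beta>(d := k)) z = z d ^ k * monom_eval d \<beta> z"
proof -
  have "(\<Prod>i<d. z i ^ (\<beta>(d := k)) i) = (\<Prod>i<d. z i ^ \<beta> i)" by (intro prod.cong) auto
  then show ?thesis unfolding monom_eval_def by (simp add: mult.commute)
qed

text \<open>Induction on \<open>d\<close>, viewing the sum as a polynomial in the last variable.\<close>
lemma sum_index_box_eq_0_if_vanishes_on_reals:
  assumes "\<forall>i\<ge>d. n i = 0"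
    and "\<And>y. (\<Sum>\<beta>\<in>index_box n. a \<beta> * monom_eval d \<beta> (\<lambda>i. of_real (y i))) = 0"
  shows "\<forall>\<beta>\<in>index_box n. a \<beta> = 0"
  using assms
proof (induction d arbitrary: n a)
  case 0
  then have "index_box n = {\<lambda>_. 0}" by (auto simp: index_box_def fun_eq_iff)
  then show ?case using "0.prems"(2)[of "\<lambda>_. 0"] by (simp add: monom_eval_def)
next
  case (Suc d)
  define n' where "n' = n(d := 0)"
  have nz': "\<forall>i\<ge>d. n' i = 0" using Suc.prems(1) by (auto simp: n'_def)
  define B where "B k y = (\<Sum>\<beta>'\<in>index_box n'. a (\<beta>'(d := k)) * monom_eval d \<beta>' (\<lambda>i. of_real (y i)))" for k y
  have B_eq_0: "B k y = 0" if "k \<le> n d" for k y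
  proof -
    let ?q = "\<Sum>k'\<le>n d. monom (B k' y) k'"
    have "poly ?q (of_real s) = 0" for s
    proof -
      have B_upd: "B k' (y(d := s)) = B k' y" for k'
      proof -
        have "monom_eval d \<beta>' (\<lambda>i. of_real ((y(d := s)) i)) = monom_eval d \<beta>' (\<lambda>i. of_real (y i))" for \<beta>'
          unfolding monom_eval_def by (intro prod.cong) auto
        then show ?thesis unfolding B_def by simp
      qed
      have "0 = (\<Sum>\<beta>\<in>index_box n. a \<beta> * monom_eval (Suc d) \<beta> (\<lambda>i. of_real ((y(d := s)) i)))"
        using Suc.prems(2) by metis
      also have "\<dots> = (\<Sum>k'\<le>n d. of_real s ^ k' * B k' (y(d := s)))"
        unfolding sum_index_box_split_last[of _ n d] monom_eval_Suc_upd B_def n'_def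
        by (simp add: sum_distrib_left mult_ac)
      also have "\<dots> = poly ?q (of_real s)"
        by (simp add: poly_sum poly_monom B_upd mult.commute)
      finally show ?thesis by simp
    qed
    then have "?q = 0" by (rule poly_eq_0_if_vanishes_on_reals)
    then have "coeff ?q k = 0" by simp
    then show ?thesis by (simp add: coeff_sum that)
  qed
  show ?case
  proof
    fix \<beta> assume "\<beta> \<in> index_box n"
    then have "\<beta>(d := 0) \<in> index_box n'" and "\<beta> d \<le> n d" by (auto simp: index_box_def n'_def)
    with Suc.IH[OF nz', of "\<lambda>\<beta>'. a (\<beta>'(d := \<beta> d))"] B_eq_0[of "\<beta> d"]
    have "a ((\<beta>(d := 0))(d := \<beta> d)) = 0" unfolding B_def by blast
    then show "a \<beta> = 0" by simp
  qed
qed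

lemma poly_ratio_real_if_roots_real:
  fixes q :: "complex poly"
  assumes "q \<noteq> 0" and "\<And>z. poly q z = 0 \<Longrightarrow> z \<in> \<real>"
    and "s \<in> \<real>" and "t \<in> \<real>" and "poly q t \<noteq> 0"
  shows "poly q s / poly q t \<in> \<real>"
  using assms
proof (induction "degree q" arbitrary: q rule: less_induct)
  case less
  show ?case
  proof (cases "degree q = 0")
    case True
    then obtain k where "q = [:k:]" by (metis degree_eq_zeroE)
    then show ?thesis using less.prems by simp
  next
    case False
    then have "\<not> constant (poly q)" by (simp add: constant_degree)
    then obtain r where r: "poly q r = 0" using Fundamental_Theorem_Algebra.fundamental_theorem_of_algebra by blast
    then obtain q' where q: "q = [:-r, 1:] * q'" by (metis poly_eq_0_iff_dvd dvdE)
    have q': "q' \<noteq> 0" using less.prems(1) q by auto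
    then have deg: "degree q' < degree q" unfolding q by (subst degree_mult_eq) auto
    have roots: "\<And>z. poly q' z = 0 \<Longrightarrow> z \<in> \<real>" using less.prems(2) q by auto
    have "poly q' t \<noteq> 0" and "t - r \<noteq> 0" using less.prems(5) q by auto
    have "poly q s / poly q t = ((s - r) / (t - r)) * (poly q' s / poly q' t)"
      unfolding q by (simp only: poly_mult times_divide_times_eq) simp
    moreover have "(s - r) / (t - r) \<in> \<real>"
      using less.prems(2-4) r by (intro Reals_divide Reals_diff)
    moreover have "poly q' s / poly q' t \<in> \<real>"
      by (rule less.hyps[OF deg q' roots less.prems(3,4) \<open>poly q' t \<noteq> 0\<close>])
    ultimately show ?thesis by (metis Reals_mult)
  qed
qed

lemma poly_not_constant_on_ball:
  fixes q :: "complex poly"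
  assumes "q \<noteq> 0" and "poly q 0 = 0" and "0 < r"
  shows "\<not> poly q constant_on ball 0 r"
proof
  assume "poly q constant_on ball 0 r"
  then obtain k where k: "\<forall>l\<in>ball 0 r. poly q l = k" by (auto simp: constant_on_def)
  with assms(2,3) have "ball 0 r \<subseteq> {l. poly q l = 0}" by auto
  then have "finite (ball (0::complex) r)" by (rule finite_subset) (rule poly_roots_finite[OF assms(1)])
  then have "ball (0::complex) r = {}" by (rule finite_imp_not_open) simp
  then show False using assms(3) by simp
qed

lemma norm_one_minus_scaled_lt_1:
  fixes t \<delta> R :: real and z :: complex
  assumes "0 < t" and "0 < \<delta>" and "\<delta> \<le> Re z" and "norm z \<le> R" and "t * R\<^sup>2 \<le> \<delta>"
  shows "norm (1 - of_real t * z) < 1"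
proof -
  have "(norm z)\<^sup>2 \<le> R\<^sup>2" using assms(4) by (intro power_mono) auto
  then have "t * ((Re z)\<^sup>2 + (Im z)\<^sup>2) \<le> \<delta>"
    using assms(1,5) by (metis cmod_power2 order_trans mult_left_mono less_imp_le)
  then have "t * (t * ((Re z)\<^sup>2 + (Im z)\<^sup>2)) \<le> t * \<delta>" using assms(1) by (intro mult_left_mono) auto
  moreover have "(norm (1 - of_real t * z))\<^sup>2 = 1 - 2 * t * Re z + t * (t * ((Re z)\<^sup>2 + (Im z)\<^sup>2))"
  proof -
    have "(norm (1 - of_real t * z))\<^sup>2 = (1 - t * Re z)\<^sup>2 + (t * Im z)\<^sup>2" by (simp add: cmod_power2)
    then show ?thesis by (simp add: power2_eq_square algebra_simps)
  qed
  moreover have "t * \<delta> \<le> t * Re z" using assms by (intro mult_left_mono) auto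
  moreover have "0 < t * \<delta>" using assms by simp
  ultimately have "(norm (1 - of_real t * z))\<^sup>2 < 1" by linarith
  then show ?thesis by (simp add: power_less_one_iff)
qed

lemma peval_nonzero_at_real_point:
  assumes "{\<beta>. a \<beta> \<noteq> 0} \<subseteq> index_box n" and "\<forall>i\<ge>d. n i = 0" and "a \<beta>\<^sub>0 \<noteq> 0"
  obtains y where "peval d a (\<lambda>i. of_real (y i)) \<noteq> 0"
proof -
  have "\<exists>y. peval d a (\<lambda>i. of_real (y i)) \<noteq> 0"
  proof (rule ccontr)
    assume "\<nexists>y. peval d a (\<lambda>i. of_real (y i)) \<noteq> 0"
    then have "\<And>y. (\<Sum>\<beta>\<in>index_box n. a \<beta> * monom_eval d \<beta> (\<lambda>i. of_real (y i))) = 0"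
      using peval_eq_sum_superset[OF finite_index_box[OF assms(2)] assms(1)] by simp
    then have "\<forall>\<beta>\<in>index_box n. a \<beta> = 0"
      by (rule sum_index_box_eq_0_if_vanishes_on_reals[OF assms(2)])
    then show False using assms(1,3) by auto
  qed
  then show ?thesis using that by blast
qed

lemma right_halfplane_line_scaled_into_polydisc:
  fixes w v :: "nat \<Rightarrow> complex"
  assumes "\<forall>i<d. 0 < Re (w i)"
  obtains r t\<^sub>0 where "0 < r" and "0 < t\<^sub>0" and "t\<^sub>0 \<le> 1"
    and "\<And>l t i. l \<in> ball (0::complex) r \<Longrightarrow> 0 < t \<Longrightarrow> t \<le> t\<^sub>0 \<Longrightarrow> i < d
           \<Longrightarrow> norm (1 - of_real t * (w i + l * v i)) < 1"
proof -
  define \<delta> where "\<delta> = Min (insert 1 ((\<lambda>i. Re (w i) / 2) ` {..<d}))"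
  define V where "V = 1 + (\<Sum>i<d. norm (v i))"
  define R where "R = 1 + (\<Sum>i<d. norm (w i)) + \<delta>"
  define r where "r = \<delta> / V"
  define t\<^sub>0 where "t\<^sub>0 = \<delta> / R\<^sup>2"
  have "0 < \<delta>" unfolding \<delta>_def using assms by (subst Min_gr_iff) (auto intro: finite_imageI)
  have "\<delta> \<le> 1" unfolding \<delta>_def by (intro Min_le) auto
  have \<delta>_le: "\<delta> \<le> Re (w i) / 2" if "i < d" for i unfolding \<delta>_def using that by (intro Min_le) auto
  have "1 \<le> V" and "1 \<le> R" using \<open>0 < \<delta>\<close> by (auto simp: V_def R_def sum_nonneg)
  have near_w: "\<delta> \<le> Re (w i + l * v i) \<and> norm (w i + l * v i) \<le> R" if "l \<in> ball 0 r" "i < d" for l :: complex and i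
  proof -
    have "norm l * norm (v i) \<le> r * V"
      using that \<open>0 < \<delta>\<close> \<open>1 \<le> V\<close> member_le_sum[of i "{..<d}" "\<lambda>i. norm (v i)"]
      by (intro mult_mono) (auto simp: r_def V_def)
    then have small: "norm (l * v i) \<le> \<delta>" using \<open>1 \<le> V\<close> by (simp add: r_def norm_mult)
    have "Re (w i) - norm (l * v i) \<le> Re (w i + l * v i)" using abs_Re_le_cmod[of "l * v i"] by simp
    moreover have "norm (w i + l * v i) \<le> norm (w i) + norm (l * v i)" by (rule norm_triangle_ineq)
    moreover have "norm (w i) \<le> (\<Sum>i<d. norm (w i))" using that(2) by (intro member_le_sum) auto
    ultimately show ?thesis using small \<delta>_le[OF that(2)] by (simp add: R_def)
  qed
  have "1 \<le> R\<^sup>2" using \<open>1 \<le> R\<close> by (simp add: one_le_power)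
  show ?thesis
  proof
    show "0 < r" and "0 < t\<^sub>0" using \<open>0 < \<delta>\<close> \<open>1 \<le> V\<close> \<open>1 \<le> R\<close> by (simp_all add: r_def t\<^sub>0_def)
    show "t\<^sub>0 \<le> 1" using \<open>\<delta> \<le> 1\<close> \<open>1 \<le> R\<^sup>2\<close> by (simp add: t\<^sub>0_def divide_le_eq_1)
    fix l :: complex and t i assume "l \<in> ball 0 r" "0 < t" "t \<le> t\<^sub>0" "i < d"
    have "t * R\<^sup>2 \<le> \<delta>"
      using \<open>t \<le> t\<^sub>0\<close> \<open>1 \<le> R\<^sup>2\<close> unfolding t\<^sub>0_def by (subst (asm) pos_le_divide_eq) auto
    with near_w[OF \<open>l \<in> ball 0 r\<close> \<open>i < d\<close>] \<open>0 < t\<close> \<open>0 < \<delta>\<close>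
    show "norm (1 - of_real t * (w i + l * v i)) < 1"
      by (intro norm_one_minus_scaled_lt_1) auto
  qed
qed

lemma peval_shift_scaled:
  assumes "{\<alpha>. c \<alpha> \<noteq> 0} \<subseteq> index_box n" and "\<forall>i\<ge>d. n i = 0"
    and "\<forall>j<M. \<forall>\<beta>. hcoef d c j \<beta> = 0" and "t \<noteq> 0"
  shows "peval d c (\<lambda>i. 1 - t * z i) / t ^ M
       = (\<Sum>j=M..(\<Sum>i<d. n i). t ^ (j - M) * peval d (hcoef d c j) z)"
proof -
  have "peval d c (\<lambda>i. 1 - t * z i) = (\<Sum>j=M..(\<Sum>i<d. n i). t ^ j * peval d (hcoef d c j) z)"
    using peval_shift_eq_sum_hcoef_from[OF assms(1-3), of "\<lambda>i. t * z i"]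
    by (simp add: peval_hcoef_scale)
  also have "\<dots> = (\<Sum>j=M..(\<Sum>i<d. n i). t ^ M * (t ^ (j - M) * peval d (hcoef d c j) z))"
    by (intro sum.cong refl) (simp add: power_add[symmetric] mult.assoc)
  also have "\<dots> = t ^ M * (\<Sum>j=M..(\<Sum>i<d. n i). t ^ (j - M) * peval d (hcoef d c j) z)"
    by (rule sum_distrib_left[symmetric])
  finally show ?thesis using assms(4) by simp
qed

lemma uniform_limit_shift_scaled_on_line:
  assumes supp: "{\<alpha>. c \<alpha> \<noteq> 0} \<subseteq> index_box n" and nz: "\<forall>i\<ge>d. n i = 0"
    and low: "\<forall>j<M. \<forall>\<beta>. hcoef d c j \<beta> = 0" and "M \<le> (\<Sum>i<d. n i)"
    and t: "t \<longlonglongrightarrow> 0" "\<And>k. 0 < t k" "\<And>k. t k \<le> 1" and "compact K"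
  shows "uniform_limit K (\<lambda>k l. peval d c (\<lambda>i. 1 - of_real (t k) * (w i + l * v i)) / of_real (t k) ^ M)
           (\<lambda>l. peval d (hcoef d c M) (\<lambda>i. w i + l * v i)) sequentially"
proof -
  define N where "N = (\<Sum>i<d. n i)"
  define F where "F k l = peval d c (\<lambda>i. 1 - of_real (t k) * (w i + l * v i)) / of_real (t k) ^ M" for k l
  define P where "P j l = peval d (hcoef d c j) (\<lambda>i. w i + l * v i)" for j l
  define G where "G l = (\<Sum>j\<in>{Suc M..N}. norm (P j l))" for l
  have "continuous_on K G" unfolding G_def P_def peval_def by (intro continuous_intros)
  then have "bounded (G ` K)" by (intro compact_imp_bounded compact_continuous_image \<open>compact K\<close>)
  then obtain C where "C > 0" and "\<forall>x\<in>G ` K. norm x \<le> C" by (auto simp: bounded_pos)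
  then have G_le: "G l \<le> C" if "l \<in> K" for l using that by fastforce
  have error_bound: "dist (F k l) (P M l) \<le> t k * C" if "l \<in> K" for k l
  proof -
    have "F k l = (\<Sum>j=M..N. of_real (t k) ^ (j - M) * P j l)"
      unfolding F_def P_def N_def using t(2)[of k]
      by (intro peval_shift_scaled[OF supp nz low]) simp
    also have "\<dots> = P M l + (\<Sum>j\<in>{Suc M..N}. of_real (t k) ^ (j - M) * P j l)"
      using \<open>M \<le> _\<close> unfolding N_def by (subst sum.atLeast_Suc_atMost) simp_all
    finally have "dist (F k l) (P M l) = norm (\<Sum>j\<in>{Suc M..N}. of_real (t k) ^ (j - M) * P j l)"
      by (simp add: dist_norm)
    also have "\<dots> \<le> (\<Sum>j\<in>{Suc M..N}. norm (of_real (t k) ^ (j - M) * P j l))"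
      by (rule norm_sum)
    also have "\<dots> \<le> (\<Sum>j\<in>{Suc M..N}. t k * norm (P j l))"
    proof (intro sum_mono)
      fix j assume "j \<in> {Suc M..N}"
      then have "t k ^ (j - M) \<le> t k ^ 1" using t(2,3)[of k] by (intro power_decreasing) auto
      then show "norm (of_real (t k) ^ (j - M) * P j l) \<le> t k * norm (P j l)"
        unfolding norm_mult norm_power norm_of_real using t(2)[of k] by (intro mult_right_mono) auto
    qed
    also have "\<dots> = t k * G l" unfolding G_def by (rule sum_distrib_left[symmetric])
    also have "\<dots> \<le> t k * C" using G_le[OF that] t(2)[of k] by (intro mult_left_mono) auto
    finally show ?thesis .
  qed
  have "(\<lambda>k. t k * C) \<longlonglongrightarrow> 0" using tendsto_mult_left_zero[OF t(1)] .
  have "uniform_limit K F (P M) sequentially"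
  proof (rule uniform_limitI)
    fix e :: real assume "e > 0"
    with \<open>(\<lambda>k. t k * C) \<longlonglongrightarrow> 0\<close> have "\<forall>\<^sub>F k in sequentially. t k * C < e"
      by (rule order_tendstoD)
    then show "\<forall>\<^sub>F k in sequentially. \<forall>l\<in>K. dist (F k l) (P M l) < e"
      by (rule eventually_mono) (auto intro: le_less_trans[OF error_bound])
  qed
  then show ?thesis unfolding F_def P_def .
qed

lemma coeffs_real_if_peval_real_on_reals:
  assumes "{\<beta>. a \<beta> \<noteq> 0} \<subseteq> index_box n" and "\<forall>i\<ge>d. n i = 0"
    and "\<And>y. peval d a (\<lambda>i. of_real (y i)) \<in> \<real>"
  shows "a \<beta> \<in> \<real>"
proof -
  have fin: "finite (index_box n)" by (rule finite_index_box[OF assms(2)])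
  have "(\<Sum>\<beta>\<in>index_box n. of_real (Im (a \<beta>)) * monom_eval d \<beta> (\<lambda>i. of_real (y i))) = 0" for y
  proof -
    define r where "r \<beta> = (\<Prod>i<d. y i ^ \<beta> i)" for \<beta>
    have monom_real: "monom_eval d \<beta> (\<lambda>i. of_real (y i)) = of_real (r \<beta>)" for \<beta>
      by (simp add: monom_eval_def r_def)
    have "(\<Sum>\<beta>\<in>index_box n. of_real (Im (a \<beta>)) * monom_eval d \<beta> (\<lambda>i. of_real (y i)))
        = of_real (\<Sum>\<beta>\<in>index_box n. Im (a \<beta> * of_real (r \<beta>)))"
      by (simp add: monom_real)
    also have "\<dots> = of_real (Im (peval d a (\<lambda>i. of_real (y i))))"
      by (simp add: peval_eq_sum_superset[OF fin assms(1)] monom_real Im_sum)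
    also have "\<dots> = 0" using assms(3)[of y] by (simp add: complex_is_Real_iff)
    finally show ?thesis .
  qed
  then have "\<forall>\<beta>\<in>index_box n. (of_real (Im (a \<beta>)) :: complex) = 0"
    by (rule sum_index_box_eq_0_if_vanishes_on_reals[OF assms(2)])
  moreover have "a \<beta> = 0" if "\<beta> \<notin> index_box n" using assms(1) that by blast
  ultimately show ?thesis by (cases "\<beta> \<in> index_box n") (auto simp: complex_is_Real_iff)
qed

lemma cnj_eq_if_rotation_real:
  assumes "norm \<nu> = 1" and "\<nu> * z \<in> \<real>"
  shows "cnj z = \<nu>\<^sup>2 * z"
proof -
  have "\<nu> * cnj \<nu> = 1" using assms(1) complex_norm_square[of \<nu>] by simp
  moreover have "cnj \<nu> * cnj z = \<nu> * z" using assms(2) by (metis Reals_cnj_iff complex_cnj_mult)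
  ultimately have "cnj z = \<nu> * (\<nu> * z)" by (metis mult.assoc mult_1)
  then show ?thesis by (simp add: power2_eq_square mult.assoc)
qed

locale stable_mpoly_vanishing_at_one =
  fixes d M :: nat and c :: "(nat \<Rightarrow> nat) \<Rightarrow> complex"
  assumes mpoly: "is_mpoly d c"
    and no_zeros_in_polydisc: "\<forall>z. (\<forall>i<d. norm (z i) < 1) \<longrightarrow> peval d c z \<noteq> 0"
    and vanishes: "vanishes_to_order d c M"
begin

lemma support_subset: "{\<alpha>. c \<alpha> \<noteq> 0} \<subseteq> index_box (mdeg c)"
  using is_mpoly_support_subset[OF mpoly] .

lemma mdeg_vanishes_above: "\<forall>i\<ge>d. mdeg c i = 0"
  using is_mpoly_mdeg_vanishes_above[OF mpoly] by blast

lemma hcoef_below_order: "\<forall>j<M. \<forall>\<beta>. hcoef d c j \<beta> = 0"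
  using vanishes by (simp add: vanishes_to_order_def)

lemma hcoef_order_nonzero: obtains \<beta>\<^sub>0 where "hcoef d c M \<beta>\<^sub>0 \<noteq> 0"
  using vanishes by (auto simp: vanishes_to_order_def)

lemma hcoef_support_subset_mdeg: "{\<beta>. hcoef d c j \<beta> \<noteq> 0} \<subseteq> index_box (mdeg c)"
  by (rule hcoef_support_subset[OF support_subset])

lemma finite_hcoef_support: "finite {\<beta>. hcoef d c j \<beta> \<noteq> 0}"
  using hcoef_support_subset_mdeg finite_index_box[OF mdeg_vanishes_above] by (rule finite_subset)

lemma order_le_total_degree: "M \<le> (\<Sum>i<d. mdeg c i)"
proof -
  obtain \<beta>\<^sub>0 where \<beta>\<^sub>0: "hcoef d c M \<beta>\<^sub>0 \<noteq> 0" by (rule hcoef_order_nonzero)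
  then have "\<beta>\<^sub>0 \<in> index_box (mdeg c)" using hcoef_support_subset_mdeg by blast
  then have "(\<Sum>i<d. \<beta>\<^sub>0 i) \<le> (\<Sum>i<d. mdeg c i)" by (intro sum_mono) (auto simp: index_box_def)
  moreover have "(\<Sum>i<d. \<beta>\<^sub>0 i) = M" using \<beta>\<^sub>0 by (auto simp: hcoef_def split: if_splits)
  ultimately show ?thesis by simp
qed

text \<open>The functions \<open>\<zeta> \<mapsto> p(u - t\<zeta>) / t\<^sup>M\<close> have no zeros where \<open>u - t\<zeta>\<close> lies in the polydisc and tend to
  the lowest-order part as \<open>t \<rightarrow> 0\<^sup>+\<close>; Hurwitz's theorem, applied on a complex line through \<open>w\<close>,
  passes the absence of zeros to the limit.\<close>
lemma hcoef_order_nonzero_on_right_halfplane: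
  assumes w: "\<forall>i<d. 0 < Re (w i)"
  shows "peval d (hcoef d c M) w \<noteq> 0"
proof
  assume zero: "peval d (hcoef d c M) w = 0"
  obtain \<beta>\<^sub>0 where "hcoef d c M \<beta>\<^sub>0 \<noteq> 0" by (rule hcoef_order_nonzero)
  then obtain y where y: "peval d (hcoef d c M) (\<lambda>i. of_real (y i)) \<noteq> 0"
    using peval_nonzero_at_real_point[OF hcoef_support_subset_mdeg mdeg_vanishes_above] by blast
  define v where "v i = of_real (y i) - w i" for i
  define g where "g l = peval d (hcoef d c M) (\<lambda>i. w i + l * v i)" for l
  obtain q where q: "\<And>l. g l = poly q l"
    unfolding g_def
    using peval_along_line_eq_poly[OF finite_hcoef_support[of M], where d = d and x = w and v = v]
    by blast
  obtain r t\<^sub>0 where "0 < r" "0 < t\<^sub>0" "t\<^sub>0 \<le> 1"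
    and into_polydisc: "\<And>l t i. l \<in> ball 0 r \<Longrightarrow> 0 < t \<Longrightarrow> t \<le> t\<^sub>0 \<Longrightarrow> i < d
           \<Longrightarrow> norm (1 - of_real t * (w i + l * v i)) < 1"
    using right_halfplane_line_scaled_into_polydisc[OF w] by blast
  define t where "t k = t\<^sub>0 / real (Suc k)" for k
  have t_pos: "0 < t k" and t_le: "t k \<le> t\<^sub>0" for k
    using \<open>0 < t\<^sub>0\<close> by (auto simp: t_def divide_le_eq)
  have "t \<longlonglongrightarrow> 0" unfolding t_def using LIMSEQ_Suc[OF lim_const_over_n[of t\<^sub>0]] by simp
  define F where "F k l = peval d c (\<lambda>i. 1 - of_real (t k) * (w i + l * v i)) / of_real (t k) ^ M" for k l
  have "g 0 \<noteq> 0"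
  proof (rule Hurwitz_no_zeros[of "ball 0 r" F g])
    show "F k holomorphic_on ball 0 r" for k
      unfolding F_def peval_def using t_pos[of k] by (intro holomorphic_intros) auto
    show "g holomorphic_on ball 0 r"
      unfolding g_def peval_def by (intro holomorphic_intros)
    show "uniform_limit K F g sequentially" if "compact K" for K
      unfolding F_def g_def using t_pos t_le \<open>t\<^sub>0 \<le> 1\<close> \<open>t \<longlonglongrightarrow> 0\<close> \<open>compact K\<close>
      by (intro uniform_limit_shift_scaled_on_line[OF support_subset mdeg_vanishes_above
            hcoef_below_order order_le_total_degree]) (auto intro: order_trans)
    show "F k l \<noteq> 0" if "l \<in> ball 0 r" for k l
      using no_zeros_in_polydisc into_polydisc[OF that t_pos t_le] t_pos[of k] by (simp add: F_def)
    have "g = poly q" using q by auto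
    moreover have "q \<noteq> 0" using y q[of 1] by (auto simp: g_def v_def)
    moreover have "poly q 0 = 0" using zero q[of 0] by (simp add: g_def)
    ultimately show "\<not> g constant_on ball 0 r"
      using poly_not_constant_on_ball[OF _ _ \<open>0 < r\<close>] by blast
  qed (use \<open>0 < r\<close> in auto)
  then show False using zero by (simp add: g_def)
qed

lemma hcoef_order_roots_real_on_line:
  assumes "\<forall>i<d. 0 < b i"
    and "peval d (hcoef d c M) (\<lambda>i. of_real (a i) + z * of_real (b i)) = 0"
  shows "z \<in> \<real>"
proof (rule ccontr)
  assume "z \<notin> \<real>"
  then have "Im z \<noteq> 0" by (simp add: complex_is_Real_iff)
  define s where "s = (if Im z > 0 then - \<i> else \<i>)"
  have "\<forall>i<d. 0 < Re (s * (of_real (a i) + z * of_real (b i)))"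
    using assms(1) \<open>Im z \<noteq> 0\<close> by (auto simp: s_def mult_neg_pos)
  then have "peval d (hcoef d c M) (\<lambda>i. s * (of_real (a i) + z * of_real (b i))) \<noteq> 0"
    by (rule hcoef_order_nonzero_on_right_halfplane)
  then show False using assms(2) by (simp add: peval_hcoef_scale)
qed

lemma hcoef_order_ratio_real_on_line:
  assumes "\<forall>i<d. 0 < b i"
    and "peval d (hcoef d c M) (\<lambda>i. of_real (a i) + of_real t * of_real (b i)) \<noteq> 0"
  shows "peval d (hcoef d c M) (\<lambda>i. of_real (a i) + of_real s * of_real (b i))
       / peval d (hcoef d c M) (\<lambda>i. of_real (a i) + of_real t * of_real (b i)) \<in> \<real>"
proof -
  obtain q where q: "\<And>z. peval d (hcoef d c M) (\<lambda>i. of_real (a i) + z * of_real (b i)) = poly q z"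
    using peval_along_line_eq_poly[OF finite_hcoef_support[of M], where x = "\<lambda>i. of_real (a i)" and v = "\<lambda>i. of_real (b i)" and d = d]
    by blast
  have "poly q (of_real s) / poly q (of_real t) \<in> \<real>"
  proof (rule poly_ratio_real_if_roots_real)
    show "poly q (of_real t) \<noteq> 0" using assms(2) by (simp add: q)
    then show "q \<noteq> 0" by auto
    show "z \<in> \<real>" if "poly q z = 0" for z
      using hcoef_order_roots_real_on_line[OF assms(1), of a z] that q[of z] by simp
  qed auto
  then show ?thesis by (simp add: q)
qed

text \<open>Any two real points are joined through two further real points by lines with a positive
  direction, along each of which the ratio of values is real.\<close>
lemma hcoef_order_ratio_real:
  "peval d (hcoef d c M) (\<lambda>i. of_real (y i)) / peval d (hcoef d c M) (\<lambda>_. 1) \<in> \<real>"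
proof -
  define P where "P z = peval d (hcoef d c M) z" for z
  have P_nonzero: "P z \<noteq> 0" if "\<forall>i<d. 0 < Re (z i)" for z
    unfolding P_def using that by (rule hcoef_order_nonzero_on_right_halfplane)
  have on_line: "P (\<lambda>i. of_real (a i) + of_real s * of_real (b i))
      / P (\<lambda>i. of_real (a i) + of_real t * of_real (b i)) \<in> \<real>"
    if "\<forall>i<d. 0 < b i" "P (\<lambda>i. of_real (a i) + of_real t * of_real (b i)) \<noteq> 0" for a b s t
    using hcoef_order_ratio_real_on_line that unfolding P_def by blast
  define T where "T = 1 + (\<Sum>i<d. \<bar>y i\<bar>)"
  define x where "x i = y i + T" for i
  have x_pos: "\<forall>i<d. 0 < x i"
  proof (intro allI impI)
    fix i assume "i < d"
    then have "\<bar>y i\<bar> \<le> (\<Sum>i<d. \<bar>y i\<bar>)" by (intro member_le_sum) auto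
    then show "0 < x i" unfolding x_def T_def by linarith
  qed
  define X where "X = (\<lambda>i. of_real (x i) :: complex)"
  define X' where "X' = (\<lambda>i. of_real (x i) + 1 :: complex)"
  have "P X \<noteq> 0" and "P X' \<noteq> 0" and "P (\<lambda>_. 1) \<noteq> 0"
    using x_pos by (auto intro!: P_nonzero simp: X_def X'_def add_pos_pos)
  have "P (\<lambda>i. of_real (y i)) / P X \<in> \<real>"
    using on_line[of "\<lambda>_. 1" y T 0] \<open>P X \<noteq> 0\<close> by (simp add: X_def x_def)
  moreover have "P X / P X' \<in> \<real>"
    using on_line[of "\<lambda>_. 1" x 1 0] \<open>P X' \<noteq> 0\<close> by (simp add: X_def X'_def)
  moreover have "P (\<lambda>_. 1) / P X' \<in> \<real>"
    using on_line[of x "\<lambda>_. 1" 1 0] x_pos \<open>P X' \<noteq> 0\<close> by (simp add: X'_def add.commute)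
  moreover have "P (\<lambda>i. of_real (y i)) / P (\<lambda>_. 1)
      = (P (\<lambda>i. of_real (y i)) / P X) * (P X / P X') / (P (\<lambda>_. 1) / P X')"
    using \<open>P X \<noteq> 0\<close> \<open>P X' \<noteq> 0\<close> \<open>P (\<lambda>_. 1) \<noteq> 0\<close> by (simp add: field_simps)
  ultimately show ?thesis unfolding P_def by (metis Reals_mult Reals_divide)
qed

lemma hcoef_order_rotation_real:
  obtains \<nu> where "norm \<nu> = 1" and "\<And>\<beta>. \<nu> * hcoef d c M \<beta> \<in> \<real>"
proof
  define P\<^sub>1 where "P\<^sub>1 = peval d (hcoef d c M) (\<lambda>_. 1)"
  have "P\<^sub>1 \<noteq> 0" unfolding P\<^sub>1_def by (rule hcoef_order_nonzero_on_right_halfplane) simp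
  define \<nu> where "\<nu> = cnj P\<^sub>1 / of_real (norm P\<^sub>1)"
  show "norm \<nu> = 1" using \<open>P\<^sub>1 \<noteq> 0\<close> by (simp add: \<nu>_def norm_divide)
  have "\<nu> * peval d (hcoef d c M) (\<lambda>i. of_real (y i)) \<in> \<real>" for y
  proof -
    have "cnj P\<^sub>1 = of_real ((norm P\<^sub>1)\<^sup>2) / P\<^sub>1" using \<open>P\<^sub>1 \<noteq> 0\<close> by (subst complex_norm_square) simp
    then have "\<nu> * peval d (hcoef d c M) (\<lambda>i. of_real (y i))
        = of_real (norm P\<^sub>1) * (peval d (hcoef d c M) (\<lambda>i. of_real (y i)) / P\<^sub>1)"
      using \<open>P\<^sub>1 \<noteq> 0\<close> by (simp add: \<nu>_def field_simps power2_eq_square)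
    then show ?thesis using hcoef_order_ratio_real[of y] unfolding P\<^sub>1_def
      by (metis Reals_mult Reals_of_real)
  qed
  moreover have supp: "{\<beta>. \<nu> * hcoef d c M \<beta> \<noteq> 0} \<subseteq> index_box (mdeg c)"
    using hcoef_support_subset_mdeg by auto
  moreover have "peval d (\<lambda>\<beta>. \<nu> * hcoef d c M \<beta>) z = \<nu> * peval d (hcoef d c M) z" for z
    using finite_index_box[OF mdeg_vanishes_above]
    by (simp add: peval_eq_sum_superset[OF _ supp] peval_eq_sum_superset[OF _ hcoef_support_subset_mdeg]
        sum_distrib_left mult.assoc)
  ultimately show "\<nu> * hcoef d c M \<beta> \<in> \<real>" for \<beta>
    using coeffs_real_if_peval_real_on_reals[OF _ mdeg_vanishes_above, of "\<lambda>\<beta>. \<nu> * hcoef d c M \<beta>"]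
    by simp
qed

lemma reflect_hcoef_below_order: "\<forall>j<M. \<forall>\<beta>. hcoef d (reflect c) j \<beta> = 0"
  using hcoef_reflect_lowest[OF support_subset mdeg_vanishes_above hcoef_below_order]
    hcoef_below_order by simp

lemma reflect_hcoef_order: "hcoef d (reflect c) M \<beta> = (-1) ^ M * cnj (hcoef d c M \<beta>)"
  by (rule hcoef_reflect_lowest[OF support_subset mdeg_vanishes_above hcoef_below_order order.refl])

end

theorem proposition14p5:
  fixes d M :: nat and c :: "(nat \<Rightarrow> nat) \<Rightarrow> complex"
  assumes "is_mpoly d c"
    and "\<forall>z. (\<forall>i<d. norm (z i) < 1) \<longrightarrow> peval d c z \<noteq> 0"
    and "vanishes_to_order d c M"
  shows "(\<forall>\<zeta>. peval d c (\<lambda>i. 1 - \<zeta> i) = (\<Sum>j=M..(\<Sum>i<d. mdeg c i). peval d (hcoef d c j) \<zeta>))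
       \<and> (\<forall>\<zeta>. peval d (reflect c) (\<lambda>i. 1 - \<zeta> i)
                = (\<Sum>j=M..(\<Sum>i<d. mdeg c i). peval d (hcoef d (reflect c) j) \<zeta>))
       \<and> (\<exists>\<nu>. norm \<nu> = 1 \<and> (\<forall>\<beta>. \<nu> * hcoef d c M \<beta> \<in> \<real>))
       \<and> (\<exists>\<mu>. norm \<mu> = 1 \<and> (\<forall>\<beta>. hcoef d (reflect c) M \<beta> = \<mu> * hcoef d c M \<beta>))"
proof -
  interpret stable_mpoly_vanishing_at_one d M c
    using assms by unfold_locales
  obtain \<nu> where \<nu>: "norm \<nu> = 1" "\<And>\<beta>. \<nu> * hcoef d c M \<beta> \<in> \<real>"
    using hcoef_order_rotation_real by blast
  have "hcoef d (reflect c) M \<beta> = ((-1) ^ M * \<nu>\<^sup>2) * hcoef d c M \<beta>" for \<beta>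
    using cnj_eq_if_rotation_real[OF \<nu>] by (simp add: reflect_hcoef_order)
  moreover have "norm ((-1) ^ M * \<nu>\<^sup>2) = 1" using \<nu>(1) by (simp add: norm_mult norm_power)
  ultimately show ?thesis
    using \<nu> peval_shift_eq_sum_hcoef_from[OF support_subset mdeg_vanishes_above hcoef_below_order]
      peval_shift_eq_sum_hcoef_from[OF reflect_support_subset mdeg_vanishes_above reflect_hcoef_below_order]
    by blast
qed

end
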